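(* Consider optimal control problem OCP-1 (described in the context), let $u_*^1$ be an optimal control with optimal trajectory $(s_*^1,e_*^1,i_*^1,j_*^1)$ and let $\psi_*=(\psi_1^*,\dots,\psi_4^* )$ be the corresponding adjoint function from the Pontryagin maximum principle. Then at every $t\in[0,T]$ at which $u_*^1(t)$ maximizes the Hamiltonian $H(s_*^1(t),e_*^1(t),i_*^1(t),j_*^1(t),\psi_*(t),u)$ over $u\in[0,u_{\max}]$: if $A_*(t)>0$, then $u_*^1(t)=u_{\max}$ when $\lambda_*^1(t)>u_{\max}$, $u_*^1(t)=\lambda_*^1(t)$ when $0\le\lambda_*^1(t)\le u_{\max}$, and $u_*^1(t)=0$ when $\lambda_*^1(t)\le 0$; and if $A_*(t)\le0$, then $u_*^1(t)=0$.
   Context: Parameters: $\beta_1,\beta_2,\gamma,\rho_1,\rho_2>0$; $\sigma_1,\sigma_2>0$ with $\sigma_1+\sigma_2=1$; $0\le u_{\max}<1$; weights $\alpha_1,\alpha_2\ge0$, $\alpha_3>0$; horizon $T>0$; initial values $s_0,e_0,i_0,j_0>0$ with $s_0+e_0+i_0+j_0\le 1$. The admissible controls are all Lebesgue measurable $u:[0,T]\to[0,u_{\max}]$. The state system is $s'=-s(\beta_1(1-u)^2i+\beta_2(1-u)j)$, $e'=s(\beta_1(1-u)^2i+\beta_2(1-u)j)-\gamma e$, $i'=\sigma_1\gamma e-\rho_1 i$, $j'=\sigma_2\gamma e-\rho_2 j$, with $s(0)=s_0,e(0)=e_0,i(0)=i_0,j(0)=j_0$. OCP-1 is the problem of minimizing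 $Q(u)=\alpha_1(e(T)+i(T)+j(T))+\alpha_2\int_0^T(e+i+j)\,dt+0.5\alpha_3\int_0^Tu^2\,dt$ over admissible controls. Its Hamiltonian is $H(s,e,i,j,\psi_1,\dots,\psi_4,u)=-s(\beta_1(1-u)^2i+\beta_2(1-u)j)(\psi_1-\psi_2)-\gamma e(\psi_2-\sigma_1\psi_3-\sigma_2\psi_4)-\rho_1 i\psi_3-\rho_2 j\psi_4-\alpha_2(e+i+j)-0.5\alpha_3u^2$. The adjoint function $\psi_*$ is a nontrivial solution of $\psi_1'=(\beta_1(1-u_*^1)^2i_*^1+\beta_2(1-u_*^1)j_*^1)(\psi_1-\psi_2)$, $\psi_2'=\gamma(\psi_2-\sigma_1\psi_3-\sigma_2\psi_4)+\alpha_2$, $\psi_3'=\beta_1(1-u_*^1)^2s_*^1(\psi_1-\psi_2)+\rho_1\psi_3+\alpha_2$, $\psi_4'=\beta_2(1-u_*^1)s_*^1(\psi_1-\psi_2)+\rho_2\psi_4+\alpha_2$, with $\psi_1(T)=0$, $\psi_2(T)=\psi_3(T)=\psi_4(T)=-\alpha_1$, and $u_*^1(t)$ maximizes the Hamiltonian along the optimal trajectory for almost all $t\in[0,T]$. Define $A_*(t)=\beta_1s_*^1(t)i_*^1(t)(\psi_1^*(t)-\psi_2^*(t))+0.5\alpha_3$, $B_*(t)=s_*^1(t)(2\beta_1i_*^1(t)+\beta_2j_*^1(t))(\psi_1^*(t)-\psi_2^*(t))$, and, whenever $A_*(t)\neq0$, the indicator function $\lambda_*^1(t)=0.5B_*(t)/A_*(t)$.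 *)

theory Defs
  imports "HOL-Analysis.Analysis"
begin

text \<open>Model OCP-1. Parameters: b1 b2 (beta_1, beta_2), g (gamma), r1 r2 (rho_1, rho_2),
  c1 c2 (sigma_1, sigma_2), umax, a1 a2 a3 (alpha weights), T horizon.\<close>

definition admissible :: "real \<Rightarrow> real \<Rightarrow> (real \<Rightarrow> real) \<Rightarrow> bool" where
  "admissible umax T u \<longleftrightarrow>
     set_borel_measurable lebesgue {0..T} u \<and> (\<forall>t\<in>{0..T}. 0 \<le> u t \<and> u t \<le> umax)"

definition infl :: "real \<Rightarrow> real \<Rightarrow> real \<Rightarrow> real \<Rightarrow> real \<Rightarrow> real \<Rightarrow> real" where
  "infl b1 b2 u s i j = s * (b1 * (1 - u)^2 * i + b2 * (1 - u) * j)"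

text \<open>Solutions of the state system in the Caratheodory sense (absolutely continuous
  functions satisfying the integrated equations), on [0,T].\<close>
definition is_trajectory ::
  "real \<Rightarrow> real \<Rightarrow> real \<Rightarrow> real \<Rightarrow> real \<Rightarrow> real \<Rightarrow> real \<Rightarrow> real \<Rightarrow>
   real \<Rightarrow> real \<Rightarrow> real \<Rightarrow> real \<Rightarrow> (real \<Rightarrow> real) \<Rightarrow>
   (real \<Rightarrow> real) \<Rightarrow> (real \<Rightarrow> real) \<Rightarrow> (real \<Rightarrow> real) \<Rightarrow> (real \<Rightarrow> real) \<Rightarrow> bool" where
  "is_trajectory b1 b2 g r1 r2 c1 c2 T s0 e0 i0 j0 u s e i j \<longleftrightarrow>
     continuous_on {0..T} s \<and> continuous_on {0..T} e \<and>
     continuous_on {0..T} i \<and> continuous_on {0..T} j \<and>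
     (\<forall>t\<in>{0..T}.
        s t = s0 + integral {0..t} (\<lambda>\<tau>. - infl b1 b2 (u \<tau>) (s \<tau>) (i \<tau>) (j \<tau>)) \<and>
        e t = e0 + integral {0..t} (\<lambda>\<tau>. infl b1 b2 (u \<tau>) (s \<tau>) (i \<tau>) (j \<tau>) - g * e \<tau>) \<and>
        i t = i0 + integral {0..t} (\<lambda>\<tau>. c1 * g * e \<tau> - r1 * i \<tau>) \<and>
        j t = j0 + integral {0..t} (\<lambda>\<tau>. c2 * g * e \<tau> - r2 * j \<tau>))"

definition cost ::
  "real \<Rightarrow> real \<Rightarrow> real \<Rightarrow> real \<Rightarrow> (real \<Rightarrow> real) \<Rightarrow>
   (real \<Rightarrow> real) \<Rightarrow> (real \<Rightarrow> real) \<Rightarrow> (real \<Rightarrow> real) \<Rightarrow> real" where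
  "cost a1 a2 a3 T u e i j =
     a1 * (e T + i T + j T) + a2 * integral {0..T} (\<lambda>t. e t + i t + j t)
     + 0.5 * a3 * integral {0..T} (\<lambda>t. (u t)^2)"

definition Ham ::
  "real \<Rightarrow> real \<Rightarrow> real \<Rightarrow> real \<Rightarrow> real \<Rightarrow> real \<Rightarrow> real \<Rightarrow> real \<Rightarrow> real \<Rightarrow>
   real \<Rightarrow> real \<Rightarrow> real \<Rightarrow> real \<Rightarrow> real \<Rightarrow> real \<Rightarrow> real \<Rightarrow> real \<Rightarrow> real \<Rightarrow> real" where
  "Ham b1 b2 g r1 r2 c1 c2 a2 a3 s e i j p1 p2 p3 p4 u =
     - infl b1 b2 u s i j * (p1 - p2) - g * e * (p2 - c1 * p3 - c2 * p4)
     - r1 * i * p3 - r2 * j * p4 - a2 * (e + i + j) - 0.5 * a3 * u^2"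

definition is_adjoint ::
  "real \<Rightarrow> real \<Rightarrow> real \<Rightarrow> real \<Rightarrow> real \<Rightarrow> real \<Rightarrow> real \<Rightarrow> real \<Rightarrow> real \<Rightarrow> real \<Rightarrow>
   (real \<Rightarrow> real) \<Rightarrow> (real \<Rightarrow> real) \<Rightarrow> (real \<Rightarrow> real) \<Rightarrow> (real \<Rightarrow> real) \<Rightarrow>
   (real \<Rightarrow> real) \<Rightarrow> (real \<Rightarrow> real) \<Rightarrow> (real \<Rightarrow> real) \<Rightarrow> (real \<Rightarrow> real) \<Rightarrow> bool" where
  "is_adjoint b1 b2 g r1 r2 c1 c2 a1 a2 T u s i j p1 p2 p3 p4 \<longleftrightarrow>
     continuous_on {0..T} p1 \<and> continuous_on {0..T} p2 \<and>
     continuous_on {0..T} p3 \<and> continuous_on {0..T} p4 \<and>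
     p1 T = 0 \<and> p2 T = - a1 \<and> p3 T = - a1 \<and> p4 T = - a1 \<and>
     (\<forall>t\<in>{0..T}.
        p1 t = p1 T - integral {t..T} (\<lambda>\<tau>. (b1 * (1 - u \<tau>)^2 * i \<tau> + b2 * (1 - u \<tau>) * j \<tau>)
                                             * (p1 \<tau> - p2 \<tau>)) \<and>
        p2 t = p2 T - integral {t..T} (\<lambda>\<tau>. g * (p2 \<tau> - c1 * p3 \<tau> - c2 * p4 \<tau>) + a2) \<and>
        p3 t = p3 T - integral {t..T} (\<lambda>\<tau>. b1 * (1 - u \<tau>)^2 * s \<tau> * (p1 \<tau> - p2 \<tau>)
                                             + r1 * p3 \<tau> + a2) \<and>
        p4 t = p4 T - integral {t..T} (\<lambda>\<tau>. b2 * (1 - u \<tau>) * s \<tau> * (p1 \<tau> - p2 \<tau>)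
                                             + r2 * p4 \<tau> + a2))"

end

theory Submission
  imports Defs
begin

(* Along the optimal trajectory H(u) = H(0) + B u - A u^2 with A = A_*(t), B = B_*(t).
   If A > 0, the maximiser of this concave parabola over [0, umax] is the point of the
   interval closest to its vertex B / (2 A) = lambda.  If A <= 0, then i > 0 forces
   s (p1 - p2) < 0, hence B - A u < 0 and H(u) < H(0) for every u in (0, 1).
   The only dynamical input is the positivity of the compartments: at the first time one
   of them vanishes it satisfies x' >= -c x before that time, and a backward Gronwall
   argument then gives x(0) = 0.
   Optimality, the adjoint system and the a.e. maximum condition are deliberately unused:
   the conclusion follows from the maximum condition at t alone. *)

lemma gronwall_backward_zero:
  fixes x :: "real \<Rightarrow> real"
  assumes "a \<le> b" and cont: "continuous_on {a..b} x"
    and nonneg: "\<And>t. t \<in> {a..b} \<Longrightarrow> 0 \<le> x t" and "0 \<le> K"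
    and bound: "\<And>t. t \<in> {a..b} \<Longrightarrow> x t \<le> K * integral {t..b} x"
  shows "x a = 0"
proof -
  define F where "F = (\<lambda>t. integral {t..b} x)"
  define G where "G t = exp (K * t) * F t" for t
  have "G a \<le> G b"
  proof (rule DERIV_nonneg_imp_increasing_open[OF \<open>a \<le> b\<close>])
    fix t assume t: "a < t" "t < b"
    have "(F has_real_derivative - x t) (at t)"
      using integral_has_real_derivative'[OF cont, of t] t by (simp add: F_def at_within_Icc_at)
    then have "(G has_real_derivative exp (K * t) * (K * F t - x t)) (at t)"
      unfolding G_def by (auto intro!: derivative_eq_intros simp: algebra_simps)
    moreover have "0 \<le> exp (K * t) * (K * F t - x t)"
      using bound[of t] t by (simp add: F_def)
    ultimately show "\<exists>y. (G has_real_derivative y) (at t) \<and> 0 \<le> y" by blast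
  next
    show "continuous_on {a..b} G"
      unfolding G_def F_def
      by (intro continuous_intros indefinite_integral_continuous_1' integrable_continuous_interval cont)
  qed
  then have "F a \<le> 0" by (simp add: G_def F_def mult_le_0_iff)
  moreover have "0 \<le> F a"
    unfolding F_def using nonneg by (intro integral_nonneg integrable_continuous_interval cont) auto
  ultimately show ?thesis
    using bound[of a] nonneg[of a] \<open>a \<le> b\<close> by (simp add: F_def)
qed

lemma integral_equation_increment:
  fixes x f :: "real \<Rightarrow> real"
  assumes int: "f integrable_on {0..T}"
    and eq: "\<And>t. t \<in> {0..T} \<Longrightarrow> x t = x0 + integral {0..t} f"
    and "0 \<le> s" "s \<le> t" "t \<le> T"
  shows "x t - x s = integral {s..t} f"
proof -
  have "f integrable_on {0..t}"
    using \<open>t \<le> T\<close> by (intro integrable_subinterval_real[OF int]) auto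
  then have "integral {0..s} f + integral {s..t} f = integral {0..t} f"
    using \<open>0 \<le> s\<close> \<open>s \<le> t\<close> by (intro Henstock_Kurzweil_Integration.integral_combine) auto
  then show ?thesis
    using eq[of s] eq[of t] assms(3-5) by simp
qed

lemma integral_equation_stays_positive:
  fixes x f :: "real \<Rightarrow> real"
  assumes cont: "continuous_on {0..T} x" and int: "f integrable_on {0..T}"
    and eq: "\<And>t. t \<in> {0..T} \<Longrightarrow> x t = x0 + integral {0..t} f" and "0 < x0"
    and "z \<in> {0..T}" and "0 \<le> c"
    and nonneg: "\<And>t. t \<in> {0..z} \<Longrightarrow> 0 \<le> x t"
    and lower: "\<And>t. t \<in> {0..z} \<Longrightarrow> - (c * x t) \<le> f t"
  shows "0 < x z"
proof (rule ccontr)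
  assume "\<not> 0 < x z"
  with nonneg[of z] \<open>z \<in> {0..T}\<close> have "x z = 0"
    by auto
  have "x 0 = 0"
  proof (rule gronwall_backward_zero[of 0 z x c])
    show "continuous_on {0..z} x"
      using \<open>z \<in> {0..T}\<close> by (intro continuous_on_subset[OF cont]) auto
    fix t assume t: "t \<in> {0..z}"
    have "integral {t..z} (\<lambda>\<tau>. - (c * x \<tau>)) \<le> integral {t..z} f"
    proof (rule integral_le)
      show "(\<lambda>\<tau>. - (c * x \<tau>)) integrable_on {t..z}"
        using t \<open>z \<in> {0..T}\<close>
        by (intro integrable_continuous_interval continuous_intros continuous_on_subset[OF cont]) auto
      show "f integrable_on {t..z}"
        using t \<open>z \<in> {0..T}\<close> by (intro integrable_subinterval_real[OF int]) auto
    qed (use t lower in auto)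
    then show "x t \<le> c * integral {t..z} x"
      using integral_equation_increment[OF int eq, of t z] t \<open>z \<in> {0..T}\<close> \<open>x z = 0\<close> by simp
  qed (use \<open>z \<in> {0..T}\<close> nonneg \<open>0 \<le> c\<close> in auto)
  then show False
    using eq[of 0] \<open>z \<in> {0..T}\<close> \<open>0 < x0\<close> by simp
qed

lemma continuous_first_zero:
  fixes m :: "real \<Rightarrow> real"
  assumes cont: "continuous_on {0..T} m" and "0 < m 0" and "t1 \<in> {0..T}" "m t1 \<le> 0"
  obtains z where "z \<in> {0..T}" "m z = 0" "\<And>t. t \<in> {0..z} \<Longrightarrow> 0 \<le> m t"
proof -
  have zero_below: "\<exists>t'\<in>{0..t}. m t' = 0" if "t \<in> {0..T}" "m t \<le> 0" for t
    using IVT2'[of m t 0 0] that \<open>0 < m 0\<close> continuous_on_subset[OF cont, of "{0..t}"] by auto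
  define Z where "Z = {t \<in> {0..T}. m t = 0}"
  have "Z \<noteq> {}"
    using zero_below[OF \<open>t1 \<in> {0..T}\<close> \<open>m t1 \<le> 0\<close>] \<open>t1 \<in> {0..T}\<close> by (force simp: Z_def)
  moreover have "bdd_below Z"
    by (rule bdd_belowI[of _ 0]) (auto simp: Z_def)
  moreover have "closed Z"
    unfolding Z_def by (intro continuous_closed_preimage_constant cont closed_atLeastAtMost)
  ultimately have "Inf Z \<in> Z"
    by (rule closed_contains_Inf)
  moreover have "0 \<le> m t" if "t \<in> {0..Inf Z}" for t
  proof (rule ccontr)
    assume "\<not> 0 \<le> m t"
    moreover have "t \<in> {0..T}"
      using that \<open>Inf Z \<in> Z\<close> by (auto simp: Z_def)
    ultimately obtain t' where "t' \<in> {0..t}" "m t' = 0"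
      using zero_below by force
    then have "t' \<in> Z" and "t' \<le> Inf Z"
      using that \<open>t \<in> {0..T}\<close> by (auto simp: Z_def)
    then have "t = Inf Z"
      using cInf_lower[OF \<open>t' \<in> Z\<close> \<open>bdd_below Z\<close>] \<open>t' \<in> {0..t}\<close> that by auto
    then show False
      using \<open>Inf Z \<in> Z\<close> \<open>\<not> 0 \<le> m t\<close> by (simp add: Z_def)
  qed
  ultimately show ?thesis
    using that by (auto simp: Z_def)
qed

lemma abs_infl_le:
  assumes "0 \<le> v" "v \<le> 1" "0 \<le> b1" "0 \<le> b2"
  shows "\<bar>infl b1 b2 v S I J\<bar> \<le> \<bar>S\<bar> * (b1 * \<bar>I\<bar> + b2 * \<bar>J\<bar>)"
proof -
  have "b1 * (1 - v)^2 * \<bar>I\<bar> \<le> b1 * \<bar>I\<bar>"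
    using assms by (intro mult_right_mono mult_left_le) (auto simp: power_le_one)
  moreover have "b2 * (1 - v) * \<bar>J\<bar> \<le> b2 * \<bar>J\<bar>"
    using assms by (intro mult_right_mono mult_left_le) auto
  ultimately have "\<bar>b1 * (1 - v)^2 * I + b2 * (1 - v) * J\<bar> \<le> b1 * \<bar>I\<bar> + b2 * \<bar>J\<bar>"
    using abs_triangle_ineq[of "b1 * (1 - v)^2 * I" "b2 * (1 - v) * J"] assms
    by (simp add: abs_mult)
  then show ?thesis
    unfolding infl_def abs_mult by (intro mult_left_mono) auto
qed

lemma infl_nonneg:
  assumes "0 \<le> v" "v \<le> 1" "0 \<le> b1" "0 \<le> b2" "0 \<le> S" "0 \<le> I" "0 \<le> J"
  shows "0 \<le> infl b1 b2 v S I J"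
  using assms unfolding infl_def by (intro mult_nonneg_nonneg add_nonneg_nonneg) auto

lemma infl_integrable:
  assumes adm: "admissible umax T u" and "umax \<le> 1" "0 \<le> b1" "0 \<le> b2"
    and cont: "continuous_on {0..T} s" "continuous_on {0..T} i" "continuous_on {0..T} j"
  shows "(\<lambda>\<tau>. infl b1 b2 (u \<tau>) (s \<tau>) (i \<tau>) (j \<tau>)) integrable_on {0..T}"
proof (rule measurable_bounded_by_integrable_imp_integrable_real)
  have "u \<in> borel_measurable (lebesgue_on {0..T})"
    using adm unfolding admissible_def set_borel_measurable_def
    by (subst borel_measurable_restrict_space_iff) auto
  moreover have "s \<in> borel_measurable (lebesgue_on {0..T})" "i \<in> borel_measurable (lebesgue_on {0..T})"
    "j \<in> borel_measurable (lebesgue_on {0..T})"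
    using cont by (auto intro: continuous_imp_measurable_on_sets_lebesgue)
  ultimately show "(\<lambda>\<tau>. infl b1 b2 (u \<tau>) (s \<tau>) (i \<tau>) (j \<tau>)) \<in> borel_measurable (lebesgue_on {0..T})"
    unfolding infl_def by measurable
  show "(\<lambda>\<tau>. \<bar>s \<tau>\<bar> * (b1 * \<bar>i \<tau>\<bar> + b2 * \<bar>j \<tau>\<bar>)) integrable_on {0..T}"
    by (intro integrable_continuous_interval continuous_intros cont)
  show "\<bar>infl b1 b2 (u \<tau>) (s \<tau>) (i \<tau>) (j \<tau>)\<bar> \<le> \<bar>s \<tau>\<bar> * (b1 * \<bar>i \<tau>\<bar> + b2 * \<bar>j \<tau>\<bar>)"
    if "\<tau> \<in> {0..T}" for \<tau>
    using adm that assms(2-4) unfolding admissible_def by (intro abs_infl_le) force+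
qed auto

lemma infl_le_linear:
  assumes adm: "admissible umax T u" and "umax \<le> 1" "0 \<le> b1" "0 \<le> b2"
    and cont: "continuous_on {0..T} i" "continuous_on {0..T} j"
  obtains K where "0 \<le> K"
    and "\<And>t S. t \<in> {0..T} \<Longrightarrow> 0 \<le> S \<Longrightarrow> infl b1 b2 (u t) S (i t) (j t) \<le> K * S"
proof -
  have "bounded ((\<lambda>\<tau>. b1 * \<bar>i \<tau>\<bar> + b2 * \<bar>j \<tau>\<bar>) ` {0..T})"
    by (intro compact_imp_bounded compact_continuous_image continuous_intros cont compact_Icc)
  then obtain K where "0 < K" and "\<forall>y \<in> (\<lambda>\<tau>. b1 * \<bar>i \<tau>\<bar> + b2 * \<bar>j \<tau>\<bar>) ` {0..T}. norm y \<le> K"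
    unfolding bounded_pos by blast
  then have K: "b1 * \<bar>i t\<bar> + b2 * \<bar>j t\<bar> \<le> K" if "t \<in> {0..T}" for t
    using that by force
  have "infl b1 b2 (u t) S (i t) (j t) \<le> K * S" if "t \<in> {0..T}" "0 \<le> S" for t S
  proof -
    have "0 \<le> u t" "u t \<le> 1"
      using adm that \<open>umax \<le> 1\<close> unfolding admissible_def by force+
    then have "infl b1 b2 (u t) S (i t) (j t) \<le> S * (b1 * \<bar>i t\<bar> + b2 * \<bar>j t\<bar>)"
      using abs_infl_le[of "u t" b1 b2 S "i t" "j t"] assms(3,4) \<open>0 \<le> S\<close> by simp
    also have "\<dots> \<le> S * K"
      using K[OF \<open>t \<in> {0..T}\<close>] \<open>0 \<le> S\<close> by (rule mult_left_mono)
    finally show ?thesis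
      by (simp add: mult.commute)
  qed
  with \<open>0 < K\<close> show ?thesis
    using that[of K] by (simp add: less_imp_le)
qed

lemma is_trajectoryD:
  assumes "is_trajectory b1 b2 g r1 r2 c1 c2 T s0 e0 i0 j0 u s e i j"
  shows "continuous_on {0..T} s" "continuous_on {0..T} e"
    "continuous_on {0..T} i" "continuous_on {0..T} j"
    and "\<And>t. t \<in> {0..T} \<Longrightarrow>
      s t = s0 + integral {0..t} (\<lambda>\<tau>. - infl b1 b2 (u \<tau>) (s \<tau>) (i \<tau>) (j \<tau>))"
    and "\<And>t. t \<in> {0..T} \<Longrightarrow>
      e t = e0 + integral {0..t} (\<lambda>\<tau>. infl b1 b2 (u \<tau>) (s \<tau>) (i \<tau>) (j \<tau>) - g * e \<tau>)"
    and "\<And>t. t \<in> {0..T} \<Longrightarrow> i t = i0 + integral {0..t} (\<lambda>\<tau>. c1 * g * e \<tau> - r1 * i \<tau>)"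
    and "\<And>t. t \<in> {0..T} \<Longrightarrow> j t = j0 + integral {0..t} (\<lambda>\<tau>. c2 * g * e \<tau> - r2 * j \<tau>)"
  using assms unfolding is_trajectory_def by blast+

lemma trajectory_positive_if_nonneg_before:
  assumes rates: "0 \<le> b1" "0 \<le> b2" "0 \<le> g" "0 \<le> r1" "0 \<le> r2" "0 \<le> c1" "0 \<le> c2"
    and "umax \<le> 1" and init: "0 < s0" "0 < e0" "0 < i0" "0 < j0"
    and adm: "admissible umax T u"
    and traj: "is_trajectory b1 b2 g r1 r2 c1 c2 T s0 e0 i0 j0 u s e i j"
    and "z \<in> {0..T}"
    and nonneg: "\<And>t. t \<in> {0..z} \<Longrightarrow> 0 \<le> s t \<and> 0 \<le> e t \<and> 0 \<le> i t \<and> 0 \<le> j t"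
  shows "0 < s z \<and> 0 < e z \<and> 0 < i z \<and> 0 < j z"
proof -
  note cont = is_trajectoryD(1-4)[OF traj] and eqs = is_trajectoryD(5-8)[OF traj]
  have in_T: "t \<in> {0..T}" and u_t: "0 \<le> u t" "u t \<le> 1" if "t \<in> {0..z}" for t
    using that \<open>z \<in> {0..T}\<close> adm \<open>umax \<le> 1\<close> unfolding admissible_def by force+
  have infl_int: "(\<lambda>\<tau>. infl b1 b2 (u \<tau>) (s \<tau>) (i \<tau>) (j \<tau>)) integrable_on {0..T}"
    using adm \<open>umax \<le> 1\<close> rates cont by (intro infl_integrable) auto
  obtain K where "0 \<le> K"
    and K: "\<And>t S. t \<in> {0..T} \<Longrightarrow> 0 \<le> S \<Longrightarrow> infl b1 b2 (u t) S (i t) (j t) \<le> K * S"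
    using infl_le_linear[OF adm \<open>umax \<le> 1\<close> rates(1,2) cont(3,4)] by blast
  have "0 < s z"
  proof (rule integral_equation_stays_positive
      [OF cont(1) integrable_neg[OF infl_int] eqs(1) \<open>0 < s0\<close> \<open>z \<in> {0..T}\<close> \<open>0 \<le> K\<close>])
    show "- (K * s t) \<le> - infl b1 b2 (u t) (s t) (i t) (j t)" if "t \<in> {0..z}" for t
      using K[OF in_T[OF that]] nonneg[OF that] by simp
  qed (use nonneg in auto)
  moreover have "0 < e z"
  proof (rule integral_equation_stays_positive
      [OF cont(2) _ eqs(2) \<open>0 < e0\<close> \<open>z \<in> {0..T}\<close> \<open>0 \<le> g\<close>])
    show "(\<lambda>\<tau>. infl b1 b2 (u \<tau>) (s \<tau>) (i \<tau>) (j \<tau>) - g * e \<tau>) integrable_on {0..T}"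
      by (intro integrable_diff infl_int integrable_continuous_interval continuous_intros cont)
    show "- (g * e t) \<le> infl b1 b2 (u t) (s t) (i t) (j t) - g * e t" if "t \<in> {0..z}" for t
      using infl_nonneg[OF u_t[OF that] rates(1,2)] nonneg[OF that] by simp
  qed (use nonneg in auto)
  moreover have "0 < i z"
  proof (rule integral_equation_stays_positive
      [OF cont(3) _ eqs(3) \<open>0 < i0\<close> \<open>z \<in> {0..T}\<close> \<open>0 \<le> r1\<close>])
    show "(\<lambda>\<tau>. c1 * g * e \<tau> - r1 * i \<tau>) integrable_on {0..T}"
      by (intro integrable_continuous_interval continuous_intros cont)
  qed (use nonneg rates in auto)
  moreover have "0 < j z"
  proof (rule integral_equation_stays_positive
      [OF cont(4) _ eqs(4) \<open>0 < j0\<close> \<open>z \<in> {0..T}\<close> \<open>0 \<le> r2\<close>])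
    show "(\<lambda>\<tau>. c2 * g * e \<tau> - r2 * j \<tau>) integrable_on {0..T}"
      by (intro integrable_continuous_interval continuous_intros cont)
  qed (use nonneg rates in auto)
  ultimately show ?thesis by blast
qed

lemma trajectory_positive:
  assumes rates: "0 \<le> b1" "0 \<le> b2" "0 \<le> g" "0 \<le> r1" "0 \<le> r2" "0 \<le> c1" "0 \<le> c2"
    and "umax \<le> 1" and init: "0 < s0" "0 < e0" "0 < i0" "0 < j0"
    and adm: "admissible umax T u"
    and traj: "is_trajectory b1 b2 g r1 r2 c1 c2 T s0 e0 i0 j0 u s e i j"
    and "t \<in> {0..T}"
  shows "0 < s t \<and> 0 < e t \<and> 0 < i t \<and> 0 < j t"
proof (rule ccontr)
  define m where "m = (\<lambda>\<tau>. min (s \<tau>) (min (e \<tau>) (min (i \<tau>) (j \<tau>))))"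
  have "continuous_on {0..T} m"
    unfolding m_def by (intro continuous_intros is_trajectoryD(1-4)[OF traj])
  moreover have "0 < m 0"
  proof -
    have "s 0 = s0" "e 0 = e0" "i 0 = i0" "j 0 = j0"
      using \<open>t \<in> {0..T}\<close> by (subst is_trajectoryD(5-8)[OF traj]; simp)+
    with init show ?thesis
      by (simp add: m_def)
  qed
  moreover assume "\<not> (0 < s t \<and> 0 < e t \<and> 0 < i t \<and> 0 < j t)"
  then have "m t \<le> 0"
    by (auto simp: m_def)
  ultimately obtain z where "z \<in> {0..T}" "m z = 0" and "\<And>\<tau>. \<tau> \<in> {0..z} \<Longrightarrow> 0 \<le> m \<tau>"
    using continuous_first_zero[OF _ _ \<open>t \<in> {0..T}\<close>] by blast
  then have "0 < s z \<and> 0 < e z \<and> 0 < i z \<and> 0 < j z"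
    by (intro trajectory_positive_if_nonneg_before[OF rates \<open>umax \<le> 1\<close> init adm traj])
      (auto simp: m_def)
  with \<open>m z = 0\<close> show False
    by (auto simp: m_def min_def split: if_splits)
qed

lemma Ham_quadratic_in_control:
  "Ham b1 b2 g r1 r2 c1 c2 a2 a3 s e i j p1 p2 p3 p4 v =
   Ham b1 b2 g r1 r2 c1 c2 a2 a3 s e i j p1 p2 p3 p4 0
   + s * (2 * b1 * i + b2 * j) * (p1 - p2) * v - (b1 * s * i * (p1 - p2) + 0.5 * a3) * v^2"
  by (simp add: Ham_def infl_def power2_eq_square algebra_simps)

lemma argmax_concave_quadratic:
  fixes A B w lo hi :: real
  assumes "0 < A" and "w \<in> {lo..hi}"
    and max: "\<And>v. v \<in> {lo..hi} \<Longrightarrow> B * v - A * v^2 \<le> B * w - A * w^2"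
  shows "w = max lo (min hi (B / (2 * A)))"
proof -
  define c where "c = B / (2 * A)"
  have square_form: "B * v - A * v^2 = A * c^2 - A * (v - c)^2" for v
    using \<open>0 < A\<close> by (simp add: c_def field_simps power2_eq_square)
  have closest: "\<bar>w - c\<bar> \<le> \<bar>v - c\<bar>" if "v \<in> {lo..hi}" for v
  proof -
    have "A * (w - c)^2 \<le> A * (v - c)^2"
      using max[OF that] square_form[of v] square_form[of w] by linarith
    then show ?thesis
      using \<open>0 < A\<close> by (simp add: abs_le_square_iff)
  qed
  have "lo \<le> hi"
    using \<open>w \<in> {lo..hi}\<close> by simp
  then have "max lo (min hi c) \<in> {lo..hi}"
    by simp
  from closest[OF this] \<open>w \<in> {lo..hi}\<close> show ?thesis
    unfolding c_def[symmetric] by (auto simp: max_def min_def split: if_splits)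
qed

lemma control_zero_if_quadratic_coeff_nonpos:
  fixes b1 b2 a3 S I J D w :: real
  assumes "0 < b1" "0 \<le> b2" "0 < a3" "0 < I" "0 \<le> J" "0 \<le> w" "w \<le> 1"
    and A: "b1 * S * I * D + 0.5 * a3 \<le> 0"
    and gain: "0 \<le> S * (2 * b1 * I + b2 * J) * D * w - (b1 * S * I * D + 0.5 * a3) * w^2"
  shows "w = 0"
proof (rule ccontr)
  assume "w \<noteq> 0"
  with \<open>0 \<le> w\<close> have "0 < w" by simp
  have "b1 * I * (S * D) < 0"
    using A \<open>0 < a3\<close> by (simp add: algebra_simps)
  then have "S * D < 0"
    using \<open>0 < b1\<close> \<open>0 < I\<close> by (simp add: mult_less_0_iff)
  moreover have "0 < b1 * I * (2 - w) + b2 * J"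
    using assms(1-7) by (intro add_pos_nonneg mult_pos_pos mult_nonneg_nonneg) auto
  ultimately have "S * D * (b1 * I * (2 - w) + b2 * J) < 0"
    by (rule mult_neg_pos)
  moreover have "0 \<le> 0.5 * a3 * w"
    using \<open>0 < a3\<close> \<open>0 < w\<close> by simp
  ultimately have "S * D * (b1 * I * (2 - w) + b2 * J) - 0.5 * a3 * w < 0"
    by linarith
  with \<open>0 < w\<close> have "w * (S * D * (b1 * I * (2 - w) + b2 * J) - 0.5 * a3 * w) < 0"
    by (rule mult_pos_neg)
  moreover have "S * (2 * b1 * I + b2 * J) * D * w - (b1 * S * I * D + 0.5 * a3) * w^2
      = w * (S * D * (b1 * I * (2 - w) + b2 * J) - 0.5 * a3 * w)"
    by (simp add: algebra_simps power2_eq_square)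
  ultimately show False
    using gain by linarith
qed

theorem corollary1:
  fixes b1 b2 g r1 r2 c1 c2 umax a1 a2 a3 T s0 e0 i0 j0 t :: real
    and u s e i j p1 p2 p3 p4 :: "real \<Rightarrow> real"
  assumes par: "b1 > 0" "b2 > 0" "g > 0" "r1 > 0" "r2 > 0"
    and sig: "c1 > 0" "c2 > 0" "c1 + c2 = 1"
    and um: "0 \<le> umax" "umax < 1"
    and wts: "a1 \<ge> 0" "a2 \<ge> 0" "a3 > 0"
    and hor: "T > 0"
    and init: "s0 > 0" "e0 > 0" "i0 > 0" "j0 > 0" "s0 + e0 + i0 + j0 \<le> 1"
    and adm: "admissible umax T u"
    and traj: "is_trajectory b1 b2 g r1 r2 c1 c2 T s0 e0 i0 j0 u s e i j"
    and opt: "\<And>v sv ev iv jv. admissible umax T v \<Longrightarrow>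
                 is_trajectory b1 b2 g r1 r2 c1 c2 T s0 e0 i0 j0 v sv ev iv jv \<Longrightarrow>
                 cost a1 a2 a3 T u e i j \<le> cost a1 a2 a3 T v ev iv jv"
    and adj: "is_adjoint b1 b2 g r1 r2 c1 c2 a1 a2 T u s i j p1 p2 p3 p4"
    and nontriv: "\<exists>\<tau>\<in>{0..T}. p1 \<tau> \<noteq> 0 \<or> p2 \<tau> \<noteq> 0 \<or> p3 \<tau> \<noteq> 0 \<or> p4 \<tau> \<noteq> 0"
    and maxae: "AE \<tau> in lebesgue. \<tau> \<in> {0..T} \<longrightarrow>
                 (\<forall>v\<in>{0..umax}.
                    Ham b1 b2 g r1 r2 c1 c2 a2 a3 (s \<tau>) (e \<tau>) (i \<tau>) (j \<tau>) (p1 \<tau>) (p2 \<tau>) (p3 \<tau>) (p4 \<tau>) v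
                    \<le> Ham b1 b2 g r1 r2 c1 c2 a2 a3 (s \<tau>) (e \<tau>) (i \<tau>) (j \<tau>) (p1 \<tau>) (p2 \<tau>) (p3 \<tau>) (p4 \<tau>) (u \<tau>))"
    and tT: "t \<in> {0..T}"
    and maxt: "\<forall>v\<in>{0..umax}.
                 Ham b1 b2 g r1 r2 c1 c2 a2 a3 (s t) (e t) (i t) (j t) (p1 t) (p2 t) (p3 t) (p4 t) v
                 \<le> Ham b1 b2 g r1 r2 c1 c2 a2 a3 (s t) (e t) (i t) (j t) (p1 t) (p2 t) (p3 t) (p4 t) (u t)"
  shows "let A = b1 * s t * i t * (p1 t - p2 t) + 0.5 * a3;
             B = s t * (2 * b1 * i t + b2 * j t) * (p1 t - p2 t);
             lam = 0.5 * B / A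
         in (A > 0 \<longrightarrow>
               (lam > umax \<longrightarrow> u t = umax) \<and>
               (0 \<le> lam \<and> lam \<le> umax \<longrightarrow> u t = lam) \<and>
               (lam \<le> 0 \<longrightarrow> u t = 0)) \<and>
            (A \<le> 0 \<longrightarrow> u t = 0)"
proof -
  have "0 < i t" "0 < j t"
    using trajectory_positive[OF _ _ _ _ _ _ _ _ init(1-4) adm traj tT] par sig um by auto
  have "0 \<le> u t" "u t \<le> umax"
    using adm tT unfolding admissible_def by auto
  define A where "A = b1 * s t * i t * (p1 t - p2 t) + 0.5 * a3"
  define B where "B = s t * (2 * b1 * i t + b2 * j t) * (p1 t - p2 t)"
  have max: "B * v - A * v^2 \<le> B * u t - A * (u t)^2" if "v \<in> {0..umax}" for v
    using maxt that unfolding A_def B_def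
    by (subst (asm) (1 2) Ham_quadratic_in_control) simp
  have "u t = max 0 (min umax (B / (2 * A)))" if "0 < A"
    using argmax_concave_quadratic[OF that _ max] \<open>0 \<le> u t\<close> \<open>u t \<le> umax\<close> by simp
  moreover have "u t = 0" if "A \<le> 0"
  proof (rule control_zero_if_quadratic_coeff_nonpos[of b1 b2 a3 "i t" "j t" "u t" "s t" "p1 t - p2 t"])
    show "b1 * s t * i t * (p1 t - p2 t) + 0.5 * a3 \<le> 0"
      using that by (simp add: A_def)
    show "0 \<le> s t * (2 * b1 * i t + b2 * j t) * (p1 t - p2 t) * u t
        - (b1 * s t * i t * (p1 t - p2 t) + 0.5 * a3) * (u t)^2"
      using max[of 0] um by (simp add: A_def B_def)
  qed (use par wts \<open>0 < i t\<close> \<open>0 < j t\<close> \<open>0 \<le> u t\<close> \<open>u t \<le> umax\<close> um in auto)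
  ultimately show ?thesis
    unfolding A_def[symmetric] B_def[symmetric] Let_def using um(1) by (auto simp: max_def min_def)
qed

end
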